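(* Consider the adaptive learning forward guidance model below, for any integer $T\ge1$ and any $\bar i<0$. Then $x_0$ and $\pi_0$ do not depend on $\bar i$: $\partial\pi_0/\partial\bar i=\partial x_0/\partial\bar i=0$ for every $T$. In particular, the model does not exhibit the forward guidance puzzle.
   Context: Parameters: $0<\beta<1$, $\sigma,\lambda>0$, $\psi>1$, gains $\gamma_{x,t},\gamma_{\pi,t}$. Model for $t\ge0$: $x_t=\hat E_t x_{t+1}-\sigma(i_t-\hat E_t\pi_{t+1})$, $\pi_t=\lambda x_t+\beta\hat E_t\pi_{t+1}$, $\hat E_t x_{t+1}=\gamma_{x,t}x_{t-1}+(1-\gamma_{x,t})\hat E_{t-1}x_t$, $\hat E_t\pi_{t+1}=\gamma_{\pi,t}\pi_{t-1}+(1-\gamma_{\pi,t})\hat E_{t-1}\pi_t$, with initial values $x_{-1},\pi_{-1},\hat E_{-1}x_0,\hat E_{-1}\pi_0$ given and not depending on $\bar i$. Policy: $i_t=0$ for $t=0,\dots,T-1$, $i_T=\bar i<0$, and $i_t=\psi\pi_t$ for $t>T$. Denote by $\partial/\partial i_T$ the derivative with respect to $\bar i$. The model exhibits the forward guidance puzzle if $\lim_{T\to\infty}\partial\pi_0/\partial i_T=\lim_{T\to\infty}\partial x_0/\partial i_T=-\infty$. *)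

theory Defs
  imports "HOL-Analysis.Analysis"
begin

text \<open>Time is indexed by int;
  the equations are imposed for all t \<ge> 0, values at t = -1 are initial conditions.
  ex t stands for \<open>E-hat_t x_{t+1}\<close>, ep t for \<open>E-hat_t pi_{t+1}\<close>.\<close>

definition fg_rate :: "real \<Rightarrow> nat \<Rightarrow> real \<Rightarrow> (int \<Rightarrow> real) \<Rightarrow> int \<Rightarrow> real" where
  "fg_rate \<psi> T ib p t = (if t < int T then 0 else if t = int T then ib else \<psi> * p t)"

definition afg_model ::
  "real \<Rightarrow> real \<Rightarrow> real \<Rightarrow> real \<Rightarrow> (int \<Rightarrow> real) \<Rightarrow> (int \<Rightarrow> real) \<Rightarrow> nat \<Rightarrow> real
   \<Rightarrow> (int \<Rightarrow> real) \<Rightarrow> (int \<Rightarrow> real) \<Rightarrow> (int \<Rightarrow> real) \<Rightarrow> (int \<Rightarrow> real) \<Rightarrow> bool" where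
  "afg_model \<beta> \<sigma> lam \<psi> gx gp T ib x p ex ep \<longleftrightarrow>
     (\<forall>t::int. t \<ge> 0 \<longrightarrow>
        x t = ex t - \<sigma> * (fg_rate \<psi> T ib p t - ep t) \<and>
        p t = lam * x t + \<beta> * ep t \<and>
        ex t = gx t * x (t - 1) + (1 - gx t) * ex (t - 1) \<and>
        ep t = gp t * p (t - 1) + (1 - gp t) * ep (t - 1))"

definition fg_puzzle :: "(nat \<Rightarrow> real \<Rightarrow> int \<Rightarrow> real) \<Rightarrow> (nat \<Rightarrow> real \<Rightarrow> int \<Rightarrow> real) \<Rightarrow> real \<Rightarrow> bool" where
  "fg_puzzle x p ib \<longleftrightarrow>
     filterlim (\<lambda>T. deriv (\<lambda>b. p T b 0) ib) at_bot sequentially \<and>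
     filterlim (\<lambda>T. deriv (\<lambda>b. x T b 0) ib) at_bot sequentially"

end

theory Submission
  imports Defs
begin

text \<open>Period 0 lies strictly before the announcement date T, so i_0 = 0 and the announced
  rate never enters period 0: x_0 and pi_0 are determined by the initial conditions and the
  gains alone. Being constant in the announced rate, they have derivative 0 with respect to it,
  and a sequence of zeros cannot diverge to minus infinity.\<close>

lemma afg_model_period0:
  assumes "afg_model \<beta> \<sigma> lam \<psi> gx gp T ib x p ex ep" and "T > 0"
  shows "ex 0 = gx 0 * x (-1) + (1 - gx 0) * ex (-1)"
    and "ep 0 = gp 0 * p (-1) + (1 - gp 0) * ep (-1)"
    and "x 0 = ex 0 + \<sigma> * ep 0"
    and "p 0 = lam * x 0 + \<beta> * ep 0"
proof -
  have "fg_rate \<psi> T ib p 0 = 0"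
    using \<open>T > 0\<close> by (simp add: fg_rate_def)
  moreover have "x 0 = ex 0 - \<sigma> * (fg_rate \<psi> T ib p 0 - ep 0) \<and> p 0 = lam * x 0 + \<beta> * ep 0
      \<and> ex 0 = gx 0 * x (0 - 1) + (1 - gx 0) * ex (0 - 1)
      \<and> ep 0 = gp 0 * p (0 - 1) + (1 - gp 0) * ep (0 - 1)"
    using assms(1) unfolding afg_model_def by blast
  ultimately show "ex 0 = gx 0 * x (-1) + (1 - gx 0) * ex (-1)"
    and "ep 0 = gp 0 * p (-1) + (1 - gp 0) * ep (-1)"
    and "x 0 = ex 0 + \<sigma> * ep 0"
    and "p 0 = lam * x 0 + \<beta> * ep 0"
    by simp_all
qed

lemma DERIV_locally_const:
  assumes "open S" "a \<in> S" "\<And>y. y \<in> S \<Longrightarrow> f y = c"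
  shows "(f has_field_derivative 0) (at a)"
  by (rule has_field_derivative_transform_within_open[where f = "\<lambda>_. c"])
    (use assms in auto)

lemma not_filterlim_at_bot_eventually_const:
  fixes f :: "'a \<Rightarrow> 'b :: {linorder, no_bot}"
  assumes "eventually (\<lambda>n. f n = c) F" and "F \<noteq> bot"
  shows "\<not> filterlim f at_bot F"
proof
  assume "filterlim f at_bot F"
  moreover obtain z where "z < c"
    using lt_ex by blast
  ultimately have "eventually (\<lambda>n. f n \<le> z) F"
    by (simp add: filterlim_at_bot)
  with assms(1) have "eventually (\<lambda>n. False) F"
    by eventually_elim (use \<open>z < c\<close> in auto)
  with \<open>F \<noteq> bot\<close> show False
    by simp
qed

theorem proposition10:
  fixes \<beta> \<sigma> lam \<psi> xm1 pm1 Exm1 Epm1 :: real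
    and gx gp :: "int \<Rightarrow> real"
    and x p ex ep :: "nat \<Rightarrow> real \<Rightarrow> int \<Rightarrow> real"
  assumes "0 < \<beta>" "\<beta> < 1" "\<sigma> > 0" "lam > 0" "\<psi> > 1"
    and model: "\<And>T ib. T \<ge> 1 \<Longrightarrow> ib < 0 \<Longrightarrow>
                  afg_model \<beta> \<sigma> lam \<psi> gx gp T ib (x T ib) (p T ib) (ex T ib) (ep T ib)"
    and init: "\<And>T ib. T \<ge> 1 \<Longrightarrow> ib < 0 \<Longrightarrow>
                  x T ib (-1) = xm1 \<and> p T ib (-1) = pm1 \<and> ex T ib (-1) = Exm1 \<and> ep T ib (-1) = Epm1"
  shows "(\<forall>T\<ge>1. \<forall>ib<0. ((\<lambda>b. p T b 0) has_real_derivative 0) (at ib)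
                      \<and> ((\<lambda>b. x T b 0) has_real_derivative 0) (at ib))
         \<and> (\<forall>ib<0. \<not> fg_puzzle x p ib)"
proof -
  define Ep0 where "Ep0 = gp 0 * pm1 + (1 - gp 0) * Epm1"
  define X0 where "X0 = gx 0 * xm1 + (1 - gx 0) * Exm1 + \<sigma> * Ep0"
  define P0 where "P0 = lam * X0 + \<beta> * Ep0"
  have period0: "x T b 0 = X0 \<and> p T b 0 = P0" if "T \<ge> 1" "b < 0" for T b
  proof -
    note eqs = afg_model_period0[OF model[OF that]]
    have "T > 0"
      using that by simp
    with eqs init[OF that] show ?thesis
      unfolding X0_def P0_def Ep0_def by simp
  qed
  have deriv0: "((\<lambda>b. p T b 0) has_real_derivative 0) (at ib)
              \<and> ((\<lambda>b. x T b 0) has_real_derivative 0) (at ib)" if "T \<ge> 1" "ib < 0" for T ib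
    using period0[OF \<open>T \<ge> 1\<close>] \<open>ib < 0\<close>
    by (intro conjI DERIV_locally_const[of "{..<0}"]) auto
  have "\<not> fg_puzzle x p ib" if "ib < 0" for ib
  proof -
    have "eventually (\<lambda>T. deriv (\<lambda>b. p T b 0) ib = 0) sequentially"
      using eventually_ge_at_top[of "1::nat"]
      by eventually_elim (use deriv0 that DERIV_imp_deriv in blast)
    then have "\<not> filterlim (\<lambda>T. deriv (\<lambda>b. p T b 0) ib) at_bot sequentially"
      by (rule not_filterlim_at_bot_eventually_const) simp
    then show ?thesis
      unfolding fg_puzzle_def by simp
  qed
  with deriv0 show ?thesis
    by blast
qed

end
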